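(* Let $\boldsymbol{G}\in\{0,1\}^{r\times m}$ with $r\le m$, let $p=\min\{\lfloor m/2\rfloor, r\}$, and let $q$ be a prime power with $q\ge\binom{m}{p}$. Let $\boldsymbol{H}\in\mathbb{F}_q^{r\times m}$ be the output of any execution of the MCD algorithm on $(\boldsymbol{G},q)$. Then for every $k\in[r]$ and every $L\subseteq[m]$, the submatrix $\boldsymbol{H}_{[k]}^{L}$ reaches its maximum possible rank, i.e. $$\mathrm{rank}\,\boldsymbol{H}_{[k]}^{L}=\max\{\mathrm{rank}\,\boldsymbol{H}'^{L}_{[k]}:\ \boldsymbol{H}'\in\mathbb{F}_q^{r\times m}\text{ fits }\boldsymbol{G}\}.$$
   Context: $\boldsymbol{H}$ fits $\boldsymbol{G}$ if $h_{k,i}=0$ whenever $g_{k,i}=0$. $\boldsymbol{H}_{[k]}$ is the submatrix of the first $k$ rows and $\boldsymbol{H}_{[k]}^{L}$ its submatrix with columns in $L$. For a matrix with columns indexed by $[m]$, a set $S\subseteq[m]$ is independent if the columns indexed by $S$ are linearly independent, dependent otherwise, and a circuit if it is dependent but every proper subset is independent. Veto sets: let $2\le k\le r$, $i\in L\subseteq[m]$, and suppose all entries of $\boldsymbol{H}_{[k]}^{L}$ other than $h_{k,i}$ are fixed. For a circuit $C$ of $\boldsymbol{H}_{[k-1]}$ with $i\in C\subseteq L$, the column of $\boldsymbol{H}_{[k-1]}$ indexed by $i$ is a unique linear combination $\sum_{j\in C\setminus\{i\}} f_j\,(\text{column } j \text{ of } \boldsymbol{H}_{[k-1]})$; its veto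 value is $c(C)=\sum_{j\in C\setminus\{i\}} f_j h_{k,j}$ (so $c(\{i\})=0$). The veto set is $Z_{k,i}^{L}=\{c(L'\cup\{i\}): L'\subseteq L\setminus\{i\},\ L'\cup\{i\}\text{ a circuit of }\boldsymbol{H}_{[k-1]}\}$. MCD algorithm on $(\boldsymbol{G},q)$, with $G_k=\{i: g_{k,i}=1\}$: set $h_{k,i}=0$ whenever $g_{k,i}=0$; set $h_{1,i}=1$ for $i\in G_1$; for $k=2,\dots,r$: let $R=G_k$; while $R\ne\emptyset$: pick any $i\in R$, set $R\leftarrow R\setminus\{i\}$ and $L=[m]\setminus R$, compute $Z_{k,i}^{L}$ from the current entries (all entries of $\boldsymbol{H}_{[k]}^{L}$ except $h_{k,i}$ are fixed at this point), and set $h_{k,i}$ to an arbitrary element of $\mathbb{F}_q\setminus Z_{k,i}^{L}$. *)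

theory Defs
  imports Main
begin

(* Matrices are functions nat => nat => 'a; rows and columns are 0-indexed.
   An r x m matrix uses rows {0..<r} and columns {0..<m}.
   Row k of the paper (1-indexed) is row k-1 here; H_[k] = rows {0..<k}. *)

definition col_indep :: "(nat \<Rightarrow> nat \<Rightarrow> 'a::field) \<Rightarrow> nat \<Rightarrow> nat set \<Rightarrow> bool" where
  "col_indep H k S \<longleftrightarrow> finite S \<and>
     (\<forall>c. (\<forall>row<k. (\<Sum>j\<in>S. c j * H row j) = 0) \<longrightarrow> (\<forall>j\<in>S. c j = 0))"

definition circuit :: "(nat \<Rightarrow> nat \<Rightarrow> 'a::field) \<Rightarrow> nat \<Rightarrow> nat set \<Rightarrow> bool" where
  "circuit H k C \<longleftrightarrow> finite C \<and> \<not> col_indep H k C \<and> (\<forall>D. D \<subset> C \<longrightarrow> col_indep H k D)"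

definition mrank :: "(nat \<Rightarrow> nat \<Rightarrow> 'a::field) \<Rightarrow> nat \<Rightarrow> nat set \<Rightarrow> nat" where
  "mrank H k L = Max {card S | S. S \<subseteq> L \<and> col_indep H k S}"

definition fits :: "nat \<Rightarrow> nat \<Rightarrow> (nat \<Rightarrow> nat \<Rightarrow> bool) \<Rightarrow> (nat \<Rightarrow> nat \<Rightarrow> 'a::field) \<Rightarrow> bool" where
  "fits r m G H \<longleftrightarrow> (\<forall>k<r. \<forall>i<m. \<not> G k i \<longrightarrow> H k i = 0)"

(* veto set Z_{k,i}^L, where k is the (0-indexed) current row, so the preceding
   rows are {0..<k}; the circuit C = L' \<union> {i} with i \<in> C \<subseteq> L, and the veto value
   is \<Sum>_{j \<in> C-{i}} f_j h_{k,j} where column i = \<Sum>_{j\<in>C-{i}} f_j column j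
   (on rows {0..<k}); f is unique for a circuit. *)
definition veto_set :: "(nat \<Rightarrow> nat \<Rightarrow> 'a::field) \<Rightarrow> nat \<Rightarrow> nat \<Rightarrow> nat set \<Rightarrow> 'a set" where
  "veto_set H k i L = {v. \<exists>C f. i \<in> C \<and> C \<subseteq> L \<and> circuit H k C \<and>
      (\<forall>row<k. H row i = (\<Sum>j\<in>C-{i}. f j * H row j)) \<and>
      v = (\<Sum>j\<in>C-{i}. f j * H k j)}"

(* H is the output of some execution of the MCD algorithm on (G, q), q = CARD('a).
   Entries are never changed once set, and the veto set only depends on entries
   already fixed at that time, so it can be evaluated on the final matrix.
   For row k, the list xs is the order in which the elements of G_k are picked;
   when xs!t is picked, R = set (drop (Suc t) xs) and L = [m] - R. *)
definition mcd_output :: "(nat \<Rightarrow> nat \<Rightarrow> bool) \<Rightarrow> nat \<Rightarrow> nat \<Rightarrow> (nat \<Rightarrow> nat \<Rightarrow> 'a::field) \<Rightarrow> bool" where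
  "mcd_output G r m H \<longleftrightarrow> fits r m G H \<and>
     (\<forall>i<m. G 0 i \<longrightarrow> H 0 i = 1) \<and>
     (\<forall>k. 1 \<le> k \<and> k < r \<longrightarrow>
        (\<exists>xs. distinct xs \<and> set xs = {i. i < m \<and> G k i} \<and>
           (\<forall>t<length xs. H k (xs ! t) \<notin>
               veto_set H k (xs ! t) ({0..<m} - set (drop (Suc t) xs)))))"

end

(* By induction on k, rank H'^L_[k] <= rank H^L_[k] for every H' fitting G and every L.
   Let S be a largest independent set of columns of H'^L_[k+1]. If S is independent already
   in H'_[k], induction applies. Otherwise some j in S with a nonzero entry of H' in the new
   row (so g_{k,j} = 1) can be dropped with S - {j} independent in H'_[k], and by induction
   only the case rank H^(L-{j})_[k] = rank H^L_[k] remains. Then j closes a circuit C of H_[k]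
   with a basis of H^(L-{j})_[k]. The element of C picked last by the algorithm saw all of C
   in its set L, so its entry avoided the veto value of C: the new row breaks the unique
   dependency of C, and the basis together with j is independent in H_[k+1]. *)

theory Submission
  imports Defs
begin

lemma col_indepI:
  assumes "finite S"
    and "\<And>c. \<forall>row<k. (\<Sum>l\<in>S. c l * H row l) = 0 \<Longrightarrow> \<forall>l\<in>S. c l = 0"
  shows "col_indep H k S"
  using assms unfolding col_indep_def by blast

lemma col_indepD:
  assumes "col_indep H k S" "\<forall>row<k. (\<Sum>l\<in>S. c l * H row l) = 0" "j \<in> S"
  shows "c j = 0"
  using assms unfolding col_indep_def by blast

lemma col_indep_finite: "col_indep H k S \<Longrightarrow> finite S"
  unfolding col_indep_def by blast

lemma col_indep_subset:
  assumes "col_indep H k S" "T \<subseteq> S"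
  shows "col_indep H k T"
proof (rule col_indepI)
  have "finite S" using assms(1) by (rule col_indep_finite)
  then show "finite T" using assms(2) by (rule finite_subset[rotated])
  fix c assume rel: "\<forall>row<k. (\<Sum>l\<in>T. c l * H row l) = 0"
  let ?c = "\<lambda>l. if l \<in> T then c l else 0"
  have "(\<Sum>l\<in>S. ?c l * H row l) = (\<Sum>l\<in>T. c l * H row l)" for row
    by (rule sum.mono_neutral_cong_right[OF \<open>finite S\<close> assms(2)]) auto
  then have "\<forall>row<k. (\<Sum>l\<in>S. ?c l * H row l) = 0" using rel by simp
  from col_indepD[OF assms(1) this] show "\<forall>l\<in>T. c l = 0"
    using assms(2) by (metis subsetD)
qed

lemma col_indep_mono_rows:
  assumes "col_indep H k S" "k \<le> k'"
  shows "col_indep H k' S"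
  using assms unfolding col_indep_def by (meson order_less_le_trans)

lemma col_indep_zero_rows_iff: "col_indep H 0 S \<longleftrightarrow> S = {}"
  unfolding col_indep_def by (auto dest: spec[of _ "\<lambda>_. 1"])

lemma circuit_zero_rows:
  assumes "circuit H 0 C" "j \<in> C"
  shows "C = {j}"
  using assms unfolding circuit_def col_indep_zero_rows_iff by blast

lemma dependent_contains_circuit:
  assumes "finite T" "\<not> col_indep H k T"
  obtains C where "C \<subseteq> T" "circuit H k C"
  using assms
proof (induction "card T" arbitrary: T rule: less_induct)
  case less
  show ?case
  proof (cases "\<forall>D. D \<subset> T \<longrightarrow> col_indep H k D")
    case True
    then show ?thesis using less.prems unfolding circuit_def by blast
  next
    case False
    then obtain D where "D \<subset> T" "\<not> col_indep H k D" by blast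
    moreover have "finite D" using \<open>D \<subset> T\<close> \<open>finite T\<close> finite_subset by blast
    ultimately show ?thesis
      using less.hyps[of D] less.prems(1) psubset_card_mono[OF \<open>finite T\<close>] by blast
  qed
qed

lemma circuit_relation:
  assumes "circuit H k C"
  obtains c where "\<forall>row<k. (\<Sum>l\<in>C. c l * H row l) = 0"
    and "\<forall>l\<in>C. c l \<noteq> 0" and "\<forall>l. l \<notin> C \<longrightarrow> c l = 0"
proof -
  have "finite C" "\<not> col_indep H k C" and minimal: "\<forall>D. D \<subset> C \<longrightarrow> col_indep H k D"
    using assms unfolding circuit_def by auto
  then obtain c0 j0 where rel0: "\<forall>row<k. (\<Sum>l\<in>C. c0 l * H row l) = 0" and "j0 \<in> C" "c0 j0 \<noteq> 0"
    unfolding col_indep_def by blast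
  define c where "c = (\<lambda>l. if l \<in> C then c0 l else 0)"
  have rel: "\<forall>row<k. (\<Sum>l\<in>C. c l * H row l) = 0"
    using rel0 unfolding c_def by simp
  have nonzero: "c l \<noteq> 0" if "l \<in> C" for l
  proof
    assume "c l = 0"
    have "(\<Sum>l'\<in>C - {l}. c l' * H row l') = (\<Sum>l'\<in>C. c l' * H row l')" for row
      using sum.remove[OF \<open>finite C\<close> \<open>l \<in> C\<close>, of "\<lambda>l'. c l' * H row l'"] \<open>c l = 0\<close> by simp
    then have "\<forall>row<k. (\<Sum>l'\<in>C - {l}. c l' * H row l') = 0" using rel by simp
    moreover have "col_indep H k (C - {l})" using minimal \<open>l \<in> C\<close> by blast
    ultimately have "c j0 = 0" if "j0 \<noteq> l" using col_indepD \<open>j0 \<in> C\<close> that by blast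
    then show False using \<open>l \<in> C\<close> \<open>c l = 0\<close> \<open>c0 j0 \<noteq> 0\<close> \<open>j0 \<in> C\<close> unfolding c_def by auto
  qed
  show thesis using that[OF rel] nonzero by (simp add: c_def)
qed

lemma col_indep_Suc_iff:
  assumes "finite S" "j \<in> S" "c j \<noteq> 0"
    and rel: "\<forall>row<k. (\<Sum>l\<in>S. c l * H row l) = 0"
    and last_row: "(\<Sum>l\<in>S. c l * H k l) \<noteq> 0"
  shows "col_indep H (Suc k) S \<longleftrightarrow> col_indep H k (S - {j})"
proof
  define \<alpha> where "\<alpha> = (\<Sum>l\<in>S. c l * H k l)"
  assume indep: "col_indep H (Suc k) S"
  show "col_indep H k (S - {j})"
  proof (rule col_indepI)
    show "finite (S - {j})" using assms(1) by simp
    fix e assume rel_e: "\<forall>row<k. (\<Sum>l\<in>S - {j}. e l * H row l) = 0"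
    define \<beta> where "\<beta> = (\<Sum>l\<in>S - {j}. e l * H k l)"
    define d where "d = (\<lambda>l. \<alpha> * (e(j := 0)) l - \<beta> * c l)"
    have e0: "(\<Sum>l\<in>S. (e(j := 0)) l * H row l) = (\<Sum>l\<in>S - {j}. e l * H row l)" for row
      using sum.remove[OF assms(1,2), of "\<lambda>l. (e(j := 0)) l * H row l"] by (auto intro: sum.cong)
    have d_sum: "(\<Sum>l\<in>S. d l * H row l)
        = \<alpha> * (\<Sum>l\<in>S - {j}. e l * H row l) - \<beta> * (\<Sum>l\<in>S. c l * H row l)" for row
      unfolding d_def e0[symmetric]
      by (simp add: left_diff_distrib sum_subtractf sum_distrib_left mult.assoc)
    have "\<forall>row<Suc k. (\<Sum>l\<in>S. d l * H row l) = 0"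
      using rel rel_e d_sum by (simp add: less_Suc_eq \<alpha>_def \<beta>_def)
    then have d0: "d l = 0" if "l \<in> S" for l using col_indepD[OF indep] that by blast
    have "\<beta> = 0" using d0[OF assms(2)] assms(3) by (simp add: d_def)
    show "\<forall>l\<in>S - {j}. e l = 0"
    proof
      fix l assume "l \<in> S - {j}"
      then have "\<alpha> * e l = 0" using d0[of l] \<open>\<beta> = 0\<close> by (simp add: d_def)
      then show "e l = 0" using last_row by (simp add: \<alpha>_def)
    qed
  qed
next
  assume indep: "col_indep H k (S - {j})"
  show "col_indep H (Suc k) S"
  proof (rule col_indepI)
    show "finite S" by fact
    fix e assume rel_e: "\<forall>row<Suc k. (\<Sum>l\<in>S. e l * H row l) = 0"
    define \<mu> where "\<mu> = e j / c j"
    define d where "d = (\<lambda>l. e l - \<mu> * c l)"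
    have d_sum: "(\<Sum>l\<in>S. d l * H row l) = (\<Sum>l\<in>S. e l * H row l) - \<mu> * (\<Sum>l\<in>S. c l * H row l)"
      for row
      unfolding d_def by (simp add: left_diff_distrib sum_subtractf sum_distrib_left mult.assoc)
    have "d j = 0" using assms(3) by (simp add: d_def \<mu>_def)
    then have "(\<Sum>l\<in>S - {j}. d l * H row l) = (\<Sum>l\<in>S. d l * H row l)" for row
      using sum.remove[OF assms(1,2), of "\<lambda>l. d l * H row l"] by simp
    then have "\<forall>row<k. (\<Sum>l\<in>S - {j}. d l * H row l) = 0" using rel rel_e d_sum by simp
    then have "d l = 0" if "l \<in> S" for l
      using col_indepD[OF indep] \<open>d j = 0\<close> that by (cases "l = j") auto
    moreover from this have "\<mu> = 0"
      using d_sum[of k] rel_e last_row by simp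
    ultimately show "\<forall>l\<in>S. e l = 0" by (simp add: d_def)
  qed
qed

lemma col_indep_Suc_pivot:
  assumes indep: "col_indep H (Suc k) S" and dep: "\<not> col_indep H k S"
  obtains j where "j \<in> S" "H k j \<noteq> 0" "col_indep H k (S - {j})"
proof -
  have "finite S" using indep by (rule col_indep_finite)
  then obtain c j0 where rel: "\<forall>row<k. (\<Sum>l\<in>S. c l * H row l) = 0" and "j0 \<in> S" "c j0 \<noteq> 0"
    using dep unfolding col_indep_def by blast
  have last_row: "(\<Sum>l\<in>S. c l * H k l) \<noteq> 0"
  proof
    assume "(\<Sum>l\<in>S. c l * H k l) = 0"
    then have "\<forall>row<Suc k. (\<Sum>l\<in>S. c l * H row l) = 0" using rel by (simp add: less_Suc_eq)
    then show False using col_indepD[OF indep] \<open>j0 \<in> S\<close> \<open>c j0 \<noteq> 0\<close> by blast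
  qed
  then obtain j where "j \<in> S" "c j * H k j \<noteq> 0" by (meson sum.neutral)
  then show thesis
    using that col_indep_Suc_iff[OF \<open>finite S\<close> _ _ rel last_row] indep by simp
qed

lemma finite_mrank_candidates:
  "finite L \<Longrightarrow> finite {card S | S. S \<subseteq> L \<and> col_indep H k S}"
  by (rule finite_subset[of _ "card ` Pow L"]) auto

lemma card_le_mrank:
  assumes "finite L" "S \<subseteq> L" "col_indep H k S"
  shows "card S \<le> mrank H k L"
  unfolding mrank_def
  by (rule Max_ge[OF finite_mrank_candidates[OF assms(1)]]) (use assms(2,3) in blast)

lemma mrank_attained:
  assumes "finite L"
  obtains S where "S \<subseteq> L" "col_indep H k S" "card S = mrank H k L"
proof -
  have "col_indep H k {}" by (simp add: col_indep_def)
  then have "mrank H k L \<in> {card S | S. S \<subseteq> L \<and> col_indep H k S}"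
    unfolding mrank_def by (intro Max_in finite_mrank_candidates[OF assms]) blast
  then obtain S where "S \<subseteq> L" "col_indep H k S" "mrank H k L = card S" by blast
  then show thesis using that by simp
qed

lemma mrank_mono:
  assumes "finite L'" "L \<subseteq> L'"
  shows "mrank H k L \<le> mrank H k L'"
proof -
  obtain S where "S \<subseteq> L" "col_indep H k S" "card S = mrank H k L"
    using mrank_attained[OF finite_subset[OF assms(2,1)]] .
  with assms card_le_mrank[of L' S H k] show ?thesis by simp
qed

lemma mrank_mono_rows:
  assumes "finite L" "k \<le> k'"
  shows "mrank H k L \<le> mrank H k' L"
proof -
  obtain S where "S \<subseteq> L" "col_indep H k S" "card S = mrank H k L"
    using mrank_attained[OF assms(1)] .
  with assms card_le_mrank[of L S H k'] col_indep_mono_rows show ?thesis by metis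
qed

lemma mrank_zero_rows: "mrank H 0 L = 0"
  by (simp add: mrank_def col_indep_zero_rows_iff)

lemma sum_scale_pivot:
  fixes c h :: "nat \<Rightarrow> 'a::field"
  assumes "finite C" "i \<in> C" "c i \<noteq> 0"
  shows "(\<Sum>l\<in>C. c l * h l) = c i * (h i - (\<Sum>l\<in>C - {i}. (- c l / c i) * h l))"
proof -
  have "c i * (- c l / c i) = - c l" for l using assms(3) by simp
  then have "c i * (\<Sum>l\<in>C - {i}. (- c l / c i) * h l) = - (\<Sum>l\<in>C - {i}. c l * h l)"
    using assms(3) by (simp add: sum_distrib_left mult.assoc[symmetric] sum_negf)
  then show ?thesis using sum.remove[OF assms(1,2), of "\<lambda>l. c l * h l"] by (simp add: right_diff_distrib)
qed

lemma not_vetoed_breaks_circuit: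
  assumes "circuit H k C" "i \<in> C" "C \<subseteq> L" "H k i \<notin> veto_set H k i L"
    and rel: "\<forall>row<k. (\<Sum>l\<in>C. c l * H row l) = 0" and "c i \<noteq> 0"
  shows "(\<Sum>l\<in>C. c l * H k l) \<noteq> 0"
proof
  have "finite C" using assms(1) by (simp add: circuit_def)
  define f where "f l = - c l / c i" for l
  have expand: "(\<Sum>l\<in>C. c l * H row l) = c i * (H row i - (\<Sum>l\<in>C - {i}. f l * H row l))" for row
    unfolding f_def using \<open>finite C\<close> \<open>i \<in> C\<close> \<open>c i \<noteq> 0\<close> by (rule sum_scale_pivot)
  assume "(\<Sum>l\<in>C. c l * H k l) = 0"
  with rel have "(\<Sum>l\<in>C. c l * H row l) = 0" if "row < Suc k" for row
    using that by (auto elim: less_SucE)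
  then have "\<forall>row<Suc k. H row i = (\<Sum>l\<in>C - {i}. f l * H row l)"
    unfolding expand using \<open>c i \<noteq> 0\<close> by simp
  then have "H k i \<in> veto_set H k i L"
    unfolding veto_set_def mem_Collect_eq using assms(1-3)
    by (intro exI[of _ C] exI[of _ f]) simp
  then show False using assms(4) by contradiction
qed

lemma last_nth_satisfying:
  "\<exists>x\<in>set xs. P x \<Longrightarrow> \<exists>t<length xs. P (xs ! t) \<and> (\<forall>x\<in>set (drop (Suc t) xs). \<not> P x)"
proof (induction xs)
  case (Cons a ys)
  show ?case
  proof (cases "\<exists>x\<in>set ys. P x")
    case True
    with Cons.IH obtain t where "t < length ys" "P (ys ! t)" "\<forall>x\<in>set (drop (Suc t) ys). \<not> P x"
      by blast
    then show ?thesis by (intro exI[of _ "Suc t"]) simp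
  next
    case False
    with Cons.prems show ?thesis by (intro exI[of _ 0]) simp
  qed
qed simp

lemma mcd_output_breaks_circuit:
  assumes mcd: "mcd_output G r m H" and "k < r"
    and "circuit H k C" "C \<subseteq> {0..<m}" "j \<in> C" "G k j"
    and rel: "\<forall>row<k. (\<Sum>l\<in>C. c l * H row l) = 0" and nonzero: "\<forall>l\<in>C. c l \<noteq> 0"
  shows "(\<Sum>l\<in>C. c l * H k l) \<noteq> 0"
proof (cases "k = 0")
  case True
  then have "C = {j}" using circuit_zero_rows assms(3,5) by blast
  moreover have "H 0 j = 1" using mcd assms(4-6) True unfolding mcd_output_def by auto
  ultimately show ?thesis using nonzero True by simp
next
  case False
  then have "1 \<le> k" by simp
  then obtain xs where xs: "set xs = {i. i < m \<and> G k i}"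
    and not_vetoed: "\<forall>t<length xs. H k (xs ! t) \<notin> veto_set H k (xs ! t) ({0..<m} - set (drop (Suc t) xs))"
    using mcd \<open>k < r\<close> unfolding mcd_output_def by meson
  have "j \<in> set xs" using xs assms(4-6) by auto
  with \<open>j \<in> C\<close> have "\<exists>x\<in>set xs. x \<in> C" by blast
  \<comment> \<open>\<open>xs ! t\<close> is the element of \<open>C\<close> picked last, so all of \<open>C\<close> lay in its set \<open>L\<close>.\<close>
  then obtain t where "t < length xs" "xs ! t \<in> C" and later: "\<forall>x\<in>set (drop (Suc t) xs). x \<notin> C"
    using last_nth_satisfying[of xs "\<lambda>x. x \<in> C"] by auto
  have "C \<subseteq> {0..<m} - set (drop (Suc t) xs)" using assms(4) later by blast
  moreover have "H k (xs ! t) \<notin> veto_set H k (xs ! t) ({0..<m} - set (drop (Suc t) xs))"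
    using not_vetoed \<open>t < length xs\<close> by blast
  moreover have "c (xs ! t) \<noteq> 0" using nonzero \<open>xs ! t \<in> C\<close> by blast
  ultimately show ?thesis
    using not_vetoed_breaks_circuit[OF assms(3) \<open>xs ! t \<in> C\<close> _ _ rel] by blast
qed

lemma mcd_output_rank_increases:
  assumes mcd: "mcd_output G r m H" and "k < r" "L \<subseteq> {0..<m}" "j \<in> L" "G k j"
    and same_rank: "mrank H k (L - {j}) = mrank H k L"
  shows "mrank H k L < mrank H (Suc k) L"
proof -
  have "finite L" using assms(3) finite_subset by blast
  obtain B where "B \<subseteq> L - {j}" "col_indep H k B" and card_B: "card B = mrank H k L"
    using mrank_attained[of "L - {j}" H k] \<open>finite L\<close> same_rank by auto
  have "finite B" "j \<notin> B" "insert j B \<subseteq> L"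
    using \<open>col_indep H k B\<close> col_indep_finite \<open>B \<subseteq> L - {j}\<close> \<open>j \<in> L\<close> by auto
  then have card_jB: "card (insert j B) = mrank H k L + 1" using card_B by simp
  then have "\<not> col_indep H k (insert j B)"
    using card_le_mrank[OF \<open>finite L\<close> \<open>insert j B \<subseteq> L\<close>] by fastforce
  then obtain C where "C \<subseteq> insert j B" and circ: "circuit H k C"
    using dependent_contains_circuit[of "insert j B" H k] \<open>finite B\<close> by blast
  have "j \<in> C"
  proof (rule ccontr)
    assume "j \<notin> C"
    then have "col_indep H k C"
      using col_indep_subset[OF \<open>col_indep H k B\<close>] \<open>C \<subseteq> insert j B\<close> by blast
    then show False using circ by (simp add: circuit_def)
  qed
  obtain c where rel: "\<forall>row<k. (\<Sum>l\<in>C. c l * H row l) = 0"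
    and nonzero: "\<forall>l\<in>C. c l \<noteq> 0" and outside: "\<forall>l. l \<notin> C \<longrightarrow> c l = 0"
    using circuit_relation[OF circ] by blast
  have on_C: "(\<Sum>l\<in>insert j B. c l * H row l) = (\<Sum>l\<in>C. c l * H row l)" for row
    using \<open>finite B\<close> \<open>C \<subseteq> insert j B\<close> outside by (intro sum.mono_neutral_right) auto
  have "(\<Sum>l\<in>C. c l * H k l) \<noteq> 0"
    using mcd_output_breaks_circuit[OF mcd \<open>k < r\<close> circ _ \<open>j \<in> C\<close> \<open>G k j\<close> rel nonzero]
      \<open>C \<subseteq> insert j B\<close> \<open>insert j B \<subseteq> L\<close> assms(3) by blast
  then have "col_indep H (Suc k) (insert j B)"
    using col_indep_Suc_iff[of "insert j B" j c k H] \<open>finite B\<close> \<open>j \<in> C\<close> nonzero rel on_C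
      \<open>col_indep H k B\<close> \<open>j \<notin> B\<close> by simp
  from card_le_mrank[OF \<open>finite L\<close> \<open>insert j B \<subseteq> L\<close> this] show ?thesis
    using card_jB by simp
qed

lemma mcd_output_mrank_maximal:
  fixes H H' :: "nat \<Rightarrow> nat \<Rightarrow> 'a::field"
  assumes mcd: "mcd_output G r m H" and fits: "fits r m G H'"
    and "k \<le> r" "L \<subseteq> {0..<m}"
  shows "mrank H' k L \<le> mrank H k L"
  using assms(3,4)
proof (induction k arbitrary: L)
  case 0
  then show ?case by (simp add: mrank_zero_rows)
next
  case (Suc k)
  have "finite L" using Suc.prems(2) finite_subset by blast
  have IH: "mrank H' k L' \<le> mrank H k L'" if "L' \<subseteq> L" for L'
    using Suc that by auto
  have rows_mono: "mrank H k L \<le> mrank H (Suc k) L"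
    by (rule mrank_mono_rows[OF \<open>finite L\<close>]) simp
  obtain S where "S \<subseteq> L" "col_indep H' (Suc k) S" and card_S: "card S = mrank H' (Suc k) L"
    using mrank_attained[OF \<open>finite L\<close>] .
  show ?case
  proof (cases "col_indep H' k S")
    case True
    then have "card S \<le> mrank H' k L" by (rule card_le_mrank[OF \<open>finite L\<close> \<open>S \<subseteq> L\<close>])
    then show ?thesis using IH[of L] rows_mono card_S by simp
  next
    case False
    then obtain j where "j \<in> S" "H' k j \<noteq> 0" and indep: "col_indep H' k (S - {j})"
      using col_indep_Suc_pivot \<open>col_indep H' (Suc k) S\<close> by blast
    have "j \<in> L" "j < m" using \<open>j \<in> S\<close> \<open>S \<subseteq> L\<close> Suc.prems(2) by auto
    then have "G k j" using fits \<open>H' k j \<noteq> 0\<close> Suc.prems(1) unfolding fits_def by (meson Suc_le_lessD)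
    have "card S - 1 \<le> mrank H' k (L - {j})"
      using card_le_mrank[of "L - {j}" "S - {j}"] \<open>finite L\<close> \<open>S \<subseteq> L\<close> indep \<open>j \<in> S\<close> by auto
    also have "\<dots> \<le> mrank H k (L - {j})" using IH by blast
    finally have card_S_le: "card S \<le> mrank H k (L - {j}) + 1" by simp
    have "mrank H k (L - {j}) \<le> mrank H k L" using mrank_mono[OF \<open>finite L\<close>] by blast
    then consider "mrank H k (L - {j}) < mrank H k L" | "mrank H k (L - {j}) = mrank H k L"
      by linarith
    then show ?thesis
    proof cases
      case 1
      then show ?thesis using card_S_le card_S rows_mono by simp
    next
      case 2
      then have "mrank H k L < mrank H (Suc k) L"
        using mcd_output_rank_increases[OF mcd _ Suc.prems(2) \<open>j \<in> L\<close> \<open>G k j\<close>] Suc.prems(1) by simp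
      then show ?thesis using card_S_le card_S 2 by simp
    qed
  qed
qed

text \<open>The hypotheses \<open>r \<le> m\<close> and \<open>q \<ge> m choose p\<close> only ensure that no veto set covers the
  whole field, i.e. that an execution exists.\<close>

theorem proposition5:
  fixes G :: "nat \<Rightarrow> nat \<Rightarrow> bool" and H :: "nat \<Rightarrow> nat \<Rightarrow> 'a::{field,finite}"
    and r m :: nat
  assumes "r \<le> m"
    and "card (UNIV :: 'a set) \<ge> m choose (min (m div 2) r)"
    and "mcd_output G r m H"
  shows "\<forall>k L. 1 \<le> k \<and> k \<le> r \<and> L \<subseteq> {0..<m} \<longrightarrow>
           mrank H k L = Max {mrank H' k L | H' :: nat \<Rightarrow> nat \<Rightarrow> 'a. fits r m G H'}"
proof (intro allI impI)
  fix k L assume "1 \<le> k \<and> k \<le> r \<and> L \<subseteq> {0..<m}"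
  then have bound: "mrank H' k L \<le> mrank H k L" if "fits r m G H'" for H' :: "nat \<Rightarrow> nat \<Rightarrow> 'a"
    using mcd_output_mrank_maximal[OF assms(3) that] by blast
  let ?ranks = "{mrank H' k L | H' :: nat \<Rightarrow> nat \<Rightarrow> 'a. fits r m G H'}"
  have "fits r m G H" using assms(3) by (simp add: mcd_output_def)
  then have "mrank H k L \<in> ?ranks" by blast
  moreover have "?ranks \<subseteq> {..mrank H k L}" using bound by blast
  ultimately show "mrank H k L = Max ?ranks"
    by (intro Max_eqI[symmetric]) (auto intro: finite_subset)
qed

end
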